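(* Let $n\ge1$, $N=\{1,\dots,n\}$, $A=[0,1]$, and let $f$ be an OWA mechanism. If $f$ satisfies proportionality (P) (equivalently, PF, or UFS) then $f$ satisfies individual fair share (IFS); and if $f$ satisfies IFS then $f$ satisfies unanimity (UN).
   Context: A mechanism is a map $f:A^n\to A$ from profiles $x=(x_i)_{i\in N}$ of reported locations to a facility location. An OWA mechanism has weights $w_1,\dots,w_n\in[0,1]$ with $\sum_j w_j=1$ and returns $f(x)=\sum_{j=1}^n w_j x_{\pi(j)}$, where $\pi$ is a permutation of $N$ with $x_{\pi(1)}\le\dots\le x_{\pi(n)}$. P: for every $x\in\{0,1\}^n$, $f(x)=\#\{i: x_i=1\}/n$. PF: for every $x$, nonempty $S\subseteq N$, $i\in S$: $|x_i-f(x)|\le 1-\frac{|S|}{n}+\max_{j\in S}x_j-\min_{j\in S}x_j$. UFS: for every $x$, every nonempty $S\subseteq N$ whose members all report the same location, and $i\in S$: $|x_i-f(x)|\le 1-\frac{|S|}{n}$. IFS: for every $x$ and $i\in N$, $|x_i-f(x)|\le1-\frac1n$. UN: whenever $x_i=c$ for all $i\in N$, $f(x)=c$. *)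

theory Defs
  imports Complex_Main
begin

text \<open>Agents are indexed 0..<n (i.e. N = {1..n} shifted); a profile is a function
  x :: nat \<Rightarrow> real whose values on {0..<n} lie in A = [0,1].\<close>

definition profile :: "nat \<Rightarrow> (nat \<Rightarrow> real) \<Rightarrow> bool" where
  "profile n x \<longleftrightarrow> (\<forall>i<n. x i \<in> {0..1})"

text \<open>OWA mechanism: weighted sum of the sorted reports x_{pi(1)} <= ... <= x_{pi(n)}
  (index j here corresponds to j+1 in the paper).\<close>

definition owa_weights :: "nat \<Rightarrow> (nat \<Rightarrow> real) \<Rightarrow> bool" where
  "owa_weights n w \<longleftrightarrow> (\<forall>j<n. w j \<in> {0..1}) \<and> (\<Sum>j<n. w j) = 1"

definition owa :: "nat \<Rightarrow> (nat \<Rightarrow> real) \<Rightarrow> (nat \<Rightarrow> real) \<Rightarrow> real" where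
  "owa n w x = (\<Sum>j<n. w j * (sort (map x [0..<n]) ! j))"

definition prop_P :: "nat \<Rightarrow> ((nat \<Rightarrow> real) \<Rightarrow> real) \<Rightarrow> bool" where
  "prop_P n f \<longleftrightarrow> (\<forall>x. (\<forall>i<n. x i \<in> {0,1}) \<longrightarrow>
      f x = real (card {i. i < n \<and> x i = 1}) / real n)"

definition prop_PF :: "nat \<Rightarrow> ((nat \<Rightarrow> real) \<Rightarrow> real) \<Rightarrow> bool" where
  "prop_PF n f \<longleftrightarrow> (\<forall>x S i. profile n x \<longrightarrow> S \<subseteq> {..<n} \<longrightarrow> S \<noteq> {} \<longrightarrow> i \<in> S \<longrightarrow>
      \<bar>x i - f x\<bar> \<le> 1 - real (card S) / real n + (Max (x ` S) - Min (x ` S)))"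

definition prop_UFS :: "nat \<Rightarrow> ((nat \<Rightarrow> real) \<Rightarrow> real) \<Rightarrow> bool" where
  "prop_UFS n f \<longleftrightarrow> (\<forall>x S i. profile n x \<longrightarrow> S \<subseteq> {..<n} \<longrightarrow> S \<noteq> {} \<longrightarrow>
      (\<forall>j\<in>S. \<forall>k\<in>S. x j = x k) \<longrightarrow> i \<in> S \<longrightarrow>
      \<bar>x i - f x\<bar> \<le> 1 - real (card S) / real n)"

definition prop_IFS :: "nat \<Rightarrow> ((nat \<Rightarrow> real) \<Rightarrow> real) \<Rightarrow> bool" where
  "prop_IFS n f \<longleftrightarrow> (\<forall>x i. profile n x \<longrightarrow> i < n \<longrightarrow> \<bar>x i - f x\<bar> \<le> 1 - 1 / real n)"

definition prop_UN :: "nat \<Rightarrow> ((nat \<Rightarrow> real) \<Rightarrow> real) \<Rightarrow> bool" where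
  "prop_UN n f \<longleftrightarrow> (\<forall>x c. profile n x \<longrightarrow> (\<forall>i<n. x i = c) \<longrightarrow> f x = c)"

end

theory Submission
  imports Defs
begin

text \<open>Proportionality
  on the sorted 0/1 step profiles fixes every tail sum of weights, so all weights equal 1/n. A
  weighted mean of values in [0,1] is within 1 - w k of the k-th value; applied to the smallest
  and the largest report, which bracket every individual report, this gives
  \<open>\<bar>x i - f x\<bar> \<le> 1 - 1/n\<close>. Unanimity holds for every OWA mechanism since the weights sum to 1.\<close>

lemma weighted_mean_dist_le:
  fixes w v :: "nat \<Rightarrow> real"
  assumes "k < n" and "\<forall>j<n. 0 \<le> w j" and "(\<Sum>j<n. w j) = 1" and "\<forall>j<n. v j \<in> {0..1}"
  shows "\<bar>(\<Sum>j<n. w j * v j) - v k\<bar> \<le> 1 - w k"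
proof -
  have "(\<Sum>j<n. w j * (v j - v k)) = (\<Sum>j<n. w j * v j) - (\<Sum>j<n. w j) * v k"
    by (simp add: right_diff_distrib sum_subtractf sum_distrib_right)
  then have "(\<Sum>j<n. w j * v j) - v k = (\<Sum>j<n. w j * (v j - v k))"
    using assms(3) by simp
  also have "\<bar>\<dots>\<bar> \<le> (\<Sum>j<n. \<bar>w j * (v j - v k)\<bar>)"
    by (rule sum_abs)
  also have "\<dots> \<le> (\<Sum>j<n. w j - (if j = k then w j else 0))"
  proof (rule sum_mono)
    fix j assume "j \<in> {..<n}"
    then have "v j \<in> {0..1}" and "v k \<in> {0..1}" and "0 \<le> w j"
      using assms by auto
    then have "\<bar>v j - v k\<bar> \<le> 1" and "0 \<le> w j"
      by auto
    then show "\<bar>w j * (v j - v k)\<bar> \<le> w j - (if j = k then w j else 0)"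
      by (auto simp: abs_mult mult_left_le)
  qed
  also have "\<dots> = 1 - w k"
    using assms(1,3) by (simp add: sum_subtractf)
  finally show ?thesis .
qed

lemma owa_of_sorted:
  assumes "sorted (map x [0..<n])"
  shows "owa n w x = (\<Sum>j<n. w j * x j)"
  using assms by (simp add: owa_def sorted_sort_id)

lemma owa_const:
  assumes "owa_weights n w"
  shows "owa n w (\<lambda>_. c) = c"
proof -
  have "owa n w (\<lambda>_. c) = (\<Sum>j<n. w j) * c"
    by (simp add: owa_of_sorted sorted_iff_nth_mono_less sum_distrib_right)
  with assms show ?thesis
    by (simp add: owa_weights_def)
qed

lemma owa_unanimous:
  assumes "owa_weights n w"
  shows "prop_UN n (owa n w)"
proof -
  have "owa n w x = c" if "\<forall>i<n. x i = c" for x and c :: real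
  proof -
    have "map x [0..<n] = map (\<lambda>_. c) [0..<n]"
      using that by simp
    then have "owa n w x = owa n w (\<lambda>_. c)"
      unfolding owa_def by (simp only:)
    with assms show ?thesis
      by (simp add: owa_const)
  qed
  then show ?thesis
    by (simp add: prop_UN_def)
qed

lemma sorted_reports_bracket:
  assumes "i < n"
  shows "sort (map x [0..<n]) ! 0 \<le> x i" and "x i \<le> sort (map x [0..<n]) ! (n - 1)"
proof -
  let ?s = "sort (map x [0..<n])"
  have "x i \<in> set ?s"
    using assms by simp
  then obtain m where "m < length ?s" "?s ! m = x i"
    by (metis in_set_conv_nth)
  then have "m < n" and xi: "x i = ?s ! m"
    by simp_all
  have "sorted ?s" and "length ?s = n"
    by simp_all
  then show "?s ! 0 \<le> x i" and "x i \<le> ?s ! (n - 1)"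
    unfolding xi using \<open>m < n\<close> by (simp_all add: sorted_nth_mono)
qed

lemma sorted_reports_in_unit:
  assumes "profile n x" and "j < n"
  shows "sort (map x [0..<n]) ! j \<in> {0..1}"
proof -
  have "sort (map x [0..<n]) ! j \<in> set (sort (map x [0..<n]))"
    using assms(2) by (intro nth_mem) simp
  then have "sort (map x [0..<n]) ! j \<in> x ` {0..<n}"
    by (simp only: set_sort set_map set_upt)
  with assms(1) show ?thesis
    by (auto simp: profile_def)
qed

lemma owa_dist_le:
  assumes "owa_weights n w" and "profile n x" and "i < n"
  shows "owa n w x - x i \<le> 1 - w 0" and "x i - owa n w x \<le> 1 - w (n - 1)"
proof -
  let ?s = "sort (map x [0..<n])"
  have "\<forall>j<n. ?s ! j \<in> {0..1}"
    using sorted_reports_in_unit[OF assms(2)] by blast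
  then have dist: "\<bar>owa n w x - ?s ! k\<bar> \<le> 1 - w k" if "k < n" for k
    unfolding owa_def
    using weighted_mean_dist_le[of k n w "(!) ?s"] that assms(1)
    by (simp add: owa_weights_def)
  show "owa n w x - x i \<le> 1 - w 0"
    using dist[of 0] sorted_reports_bracket(1)[OF assms(3), of x] assms(3) by linarith
  show "x i - owa n w x \<le> 1 - w (n - 1)"
    using dist[of "n - 1"] sorted_reports_bracket(2)[OF assms(3), of x] assms(3) by linarith
qed

lemma owa_step_profile_eq_tail_sum:
  "owa n w (\<lambda>i. if i < k then 0 else 1) = (\<Sum>j\<in>{k..<n}. w j)"
proof -
  have "owa n w (\<lambda>i. if i < k then 0 else 1) = (\<Sum>j<n. if k \<le> j then w j else 0)"
    by (auto simp: owa_of_sorted sorted_iff_nth_mono_less not_less intro!: sum.cong)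
  also have "\<dots> = sum w ({..<n} \<inter> {j. k \<le> j})"
    by (simp add: sum.inter_restrict)
  also have "{..<n} \<inter> {j. k \<le> j} = {k..<n}"
    by auto
  finally show ?thesis .
qed

lemma proportional_owa_tail_weights:
  assumes "prop_P n (owa n w)"
  shows "(\<Sum>j\<in>{k..<n}. w j) = real (n - k) / real n"
proof -
  let ?x = "\<lambda>i. if i < k then 0 else 1 :: real"
  have "{i. i < n \<and> ?x i = 1} = {k..<n}"
    by auto
  with assms have "owa n w ?x = real (n - k) / real n"
    by (simp add: prop_P_def)
  then show ?thesis
    by (simp add: owa_step_profile_eq_tail_sum)
qed

lemma proportional_owa_uniform_weights:
  assumes "prop_P n (owa n w)" and "k < n"
  shows "w k = 1 / real n"
proof -
  have "w k = (\<Sum>j\<in>{k..<n}. w j) - (\<Sum>j\<in>{Suc k..<n}. w j)"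
    using assms(2) by (simp add: sum.atLeast_Suc_lessThan)
  also have "\<dots> = (real (n - k) - real (n - Suc k)) / real n"
    using assms(1) by (simp add: proportional_owa_tail_weights diff_divide_distrib)
  also have "\<dots> = 1 / real n"
    using assms(2) by (simp add: of_nat_diff)
  finally show ?thesis .
qed

lemma proportional_owa_imp_IFS:
  assumes "owa_weights n w" and "prop_P n (owa n w)"
  shows "prop_IFS n (owa n w)"
proof -
  have "\<bar>x i - owa n w x\<bar> \<le> 1 - 1 / real n" if "profile n x" and "i < n" for x i
    using owa_dist_le[OF assms(1) that] proportional_owa_uniform_weights[OF assms(2)] that
    by (simp add: abs_le_iff)
  then show ?thesis
    by (simp add: prop_IFS_def)
qed

lemma PF_imp_UFS:
  assumes "prop_PF n f"
  shows "prop_UFS n f"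
proof -
  have "\<bar>x i - f x\<bar> \<le> 1 - real (card S) / real n"
    if "profile n x" "S \<subseteq> {..<n}" "S \<noteq> {}" "\<forall>j\<in>S. \<forall>k\<in>S. x j = x k" "i \<in> S" for x S i
  proof -
    have "x ` S = {x i}"
      using that(4,5) by blast
    then show ?thesis
      using assms[unfolded prop_PF_def, rule_format, OF that(1,2,3,5)] by simp
  qed
  then show ?thesis
    unfolding prop_UFS_def by blast
qed

lemma UFS_imp_IFS:
  assumes "prop_UFS n f"
  shows "prop_IFS n f"
proof -
  have "\<bar>x i - f x\<bar> \<le> 1 - real (card {i}) / real n" if "profile n x" "i < n" for x i
    using assms[unfolded prop_UFS_def, rule_format, of x "{i}" i] that by simp
  then show ?thesis
    unfolding prop_IFS_def by simp
qed

theorem mainTheorem7: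
  fixes n :: nat and w :: "nat \<Rightarrow> real"
  assumes "n \<ge> 1" and "owa_weights n w"
  shows "((prop_P n (owa n w) \<or> prop_PF n (owa n w) \<or> prop_UFS n (owa n w))
            \<longrightarrow> prop_IFS n (owa n w))
         \<and> (prop_IFS n (owa n w) \<longrightarrow> prop_UN n (owa n w))"
  using proportional_owa_imp_IFS[OF assms(2)] PF_imp_UFS UFS_imp_IFS owa_unanimous[OF assms(2)]
  by blast

end
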